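(* Let $n\equiv 1$ or $5 \pmod 6$, let $(\mathbb{Z}_{2n},B)$ be any SQS$(2n)$, and let $B_0,\dots,B_{2n-1}$ be the $2n$ collections of quadruples on $\mathbb{Z}_{2n}\times\mathbb{Z}_2$ obtained by the DLS construction from $(\mathbb{Z}_{2n},B)$ and the Latin square $M_n$. A quadruple $\{(v,0),(x,0),(y,1),(z,1)\}$ (with $v\ne x$, $y\ne z$ in $\{0,\dots,2n-1\}$) is contained in $B_0\cup\dots\cup B_{2n-1}$ if and only if either (a) there is $i$ with $1\le i\le \frac{n-1}{2}$ such that $\{v,x\}\in\mathcal{A}_i\cup\mathcal{B}_i$ and $\{y,z\}\in\mathcal{A}_i\cup\mathcal{B}_i$, or (b) there is $i$ with $0\le i\le n-1$ such that $\{v,x\}\in\mathcal{C}_i$ and $\{y,z\}\in\mathcal{D}_{i-1}\cup\mathcal{D}_i$ (indices modulo $n$). Moreover each such quadruple is contained in exactly one of $B_0,\dots,B_{2n-1}$.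
   Context: Identify $\mathbb{Z}_{2n}$ with $\{0,1,\dots,2n-1\}$. Define, for $1\le i\le \frac{n-1}{2}$: $\mathcal{A}_i=\{\{x,y\}: x,y\in\{0,\dots,n-1\},\ y-x\equiv i \pmod n\}$ and $\mathcal{B}_i=\{\{x,y\}: x,y\in\{n,\dots,2n-1\},\ y-x\equiv i\pmod n\}$; for $0\le i\le n-1$: $\mathcal{C}_i=\{\{x,y\}: 0\le x\le n-1,\ n\le y\le 2n-1,\ x+y\equiv i\pmod n\}$ and $\mathcal{D}_i=\{\{x,y\}: 0\le x\le n-1,\ n\le y\le 2n-1,\ y-x\equiv i\pmod n\}$. The $2n\times 2n$ Latin square $M_n$ on $\{0,\dots,2n-1\}$, with rows and columns indexed by $0,\dots,2n-1$, is defined for $0\le r,c\le n-1$ by $M_n(r,c)=(r-c)\bmod n$, $M_n(r,n+c)=n+((r+c)\bmod n)$, $M_n(n+r,c)=n+((r+c-1)\bmod n)$, $M_n(n+r,n+c)=(r-c)\bmod n$, where $a\bmod n\in\{0,\dots,n-1\}$; it has no $2\times2$ subsquares. An SQS$(m)$ is a set of $m$ points with a collection of $4$-subsets such that each $3$-subset lies in exactly one of them. DLS construction with SQS $(\mathbb{Z}_v,B)$ and $v\times v$ Latin square $A$: for $i\in\mathbb{Z}_v$ let $\alpha_i(j)=A(i,j)$; $B_i$ consists of (1) for each block $\{x_1,x_2,x_3,x_4\}\in B$ and each choice of a distinguished element $x_k$ (others $x_a,x_b,x_c$), the quadruples $\{(x_a,0),(x_b,0),(x_c,0),(\alpha_i(x_k),1)\}$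 and $\{(x_a,1),(x_b,1),(x_c,1),(\alpha_i(x_k),0)\}$; (2) for each pair $\{x_1,x_2\}\subset\mathbb{Z}_v$ the quadruple $\{(x_1,0),(x_2,0),(\alpha_i(x_1),1),(\alpha_i(x_2),1)\}$. Here $v=2n$, $A=M_n$, and $B_r$ uses row $r$ of $M_n$. *)

theory Defs
  imports "HOL-Number_Theory.Cong"
begin

text \<open>Points of Z_v are identified with {0..<v}; Z_2 with {0,1} (as nat).\<close>

definition is_SQS :: "nat \<Rightarrow> nat set set \<Rightarrow> bool" where
  "is_SQS v B \<longleftrightarrow>
     (\<forall>b\<in>B. b \<subseteq> {0..<v} \<and> card b = 4) \<and>
     (\<forall>T. T \<subseteq> {0..<v} \<and> card T = 3 \<longrightarrow> (\<exists>!b. b \<in> B \<and> T \<subseteq> b))"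

definition M :: "nat \<Rightarrow> nat \<Rightarrow> nat \<Rightarrow> nat" where
  "M n r c =
    (if r < n \<and> c < n then nat ((int r - int c) mod int n)
     else if r < n then n + nat ((int r + int (c - n)) mod int n)
     else if c < n then n + nat ((int (r - n) + int c - 1) mod int n)
     else nat ((int (r - n) - int (c - n)) mod int n))"

definition DLS_block :: "nat \<Rightarrow> nat set set \<Rightarrow> (nat \<Rightarrow> nat \<Rightarrow> nat) \<Rightarrow> nat \<Rightarrow> (nat \<times> nat) set set" where
  "DLS_block v B A i =
     {(\<lambda>t. (t, 0::nat)) ` (b - {k}) \<union> {(A i k, 1)} | b k. b \<in> B \<and> k \<in> b}
   \<union> {(\<lambda>t. (t, 1::nat)) ` (b - {k}) \<union> {(A i k, 0)} | b k. b \<in> B \<and> k \<in> b}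
   \<union> {{(x1, 0), (x2, 0), (A i x1, 1), (A i x2, 1)} | x1 x2.
         x1 < v \<and> x2 < v \<and> x1 \<noteq> x2}"

definition A_cls :: "nat \<Rightarrow> int \<Rightarrow> nat set set" where
  "A_cls n i = {{x, y} | x y. x < n \<and> y < n \<and> [int y - int x = i] (mod int n)}"

definition B_cls :: "nat \<Rightarrow> int \<Rightarrow> nat set set" where
  "B_cls n i = {{x, y} | x y. n \<le> x \<and> x < 2*n \<and> n \<le> y \<and> y < 2*n
                   \<and> [int y - int x = i] (mod int n)}"

definition C_cls :: "nat \<Rightarrow> int \<Rightarrow> nat set set" where
  "C_cls n i = {{x, y} | x y. x < n \<and> n \<le> y \<and> y < 2*n \<and> [int x + int y = i] (mod int n)}"

definition D_cls :: "nat \<Rightarrow> int \<Rightarrow> nat set set" where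
  "D_cls n i = {{x, y} | x y. x < n \<and> n \<le> y \<and> y < 2*n \<and> [int y - int x = i] (mod int n)}"

end

theory Submission
  imports Defs
begin

(* Row r of M_n maps a column c to the element of {0..<2n} that lies in {0..<n} exactly
   when r and c lie in the same half and whose residue mod n is r + M_offset n (r < n) c.
   A quadruple {(v,0),(x,0),(y,1),(z,1)} can only be a block of the third kind of the DLS
   construction, so it lies in the collection of row r iff {y,z} = {M_n(r,v), M_n(r,x)}.
   Such a row exists iff y and z lie in the halves forced by v and x and z - y is congruent
   to the difference of the two offsets: this is +-(x - v) when v and x lie in the same
   half, giving (a), and v + x or 1 - (v + x) otherwise, giving (b).  The row is unique
   because the columns of M_n are injective and, n being odd, M_n has no 2x2 subsquares. *)

lemma ex_bool_determined_iff: "(\<exists>u. (a \<longleftrightarrow> (u \<longleftrightarrow> b)) \<and> P u) \<longleftrightarrow> P (a \<longleftrightarrow> b)"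
proof -
  have "(a \<longleftrightarrow> (u \<longleftrightarrow> b)) \<longleftrightarrow> u = (a \<longleftrightarrow> b)" for u
    by blast
  then show ?thesis
    by simp
qed

lemma nat_mod_less:
  "0 < n \<Longrightarrow> nat (a mod int n) < n"
  by (simp add: nat_less_iff)

lemma cong_diff_swap:
  fixes a b d m :: int
  shows "[a - b = d] (mod m) \<longleftrightarrow> [b - a = - d] (mod m)"
  by (metis cong_minus_minus_iff minus_diff_eq)

lemma cong_pm_sym:
  fixes a b m :: int
  assumes "[a = b] (mod m) \<or> [a = - b] (mod m)"
  shows "[b = a] (mod m) \<or> [b = - a] (mod m)"
  using assms by (metis cong_minus_minus_iff cong_sym minus_minus)

lemma cong_pm_trans:
  fixes a b c m :: int
  assumes "[a = b] (mod m) \<or> [a = - b] (mod m)" "[b = c] (mod m) \<or> [b = - c] (mod m)"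
  shows "[a = c] (mod m) \<or> [a = - c] (mod m)"
  using assms by (metis cong_minus_minus_iff cong_trans minus_minus)

lemma odd_cong_pm_representative:
  fixes n :: nat and d :: int
  assumes "odd n" "\<not> [d = 0] (mod int n)"
  obtains i where "1 \<le> i" "2*i \<le> int n - 1" "[d = i] (mod int n) \<or> [d = - i] (mod int n)"
proof -
  define m where "m = d mod int n"
  have "n > 0"
    using assms(1) by (simp add: odd_pos)
  then have "0 \<le> m" "m < int n"
    by (simp_all add: m_def)
  moreover have "m \<noteq> 0"
    using assms(2) by (simp add: m_def cong_def)
  ultimately have m_range: "0 < m" "m < int n"
    by auto
  have "2*m \<noteq> int n"
    using assms(1) by (metis dvd_triv_left even_of_nat)
  show ?thesis
  proof (cases "2*m \<le> int n - 1")
    case True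
    have "[d = m] (mod int n)"
      using m_range by (simp add: m_def cong_def)
    with True m_range show ?thesis
      by (intro that[of m]) auto
  next
    case False
    have "[d = - (int n - m)] (mod int n)"
      using m_range by (simp add: m_def cong_def)
    with False m_range \<open>2*m \<noteq> int n\<close> show ?thesis
      by (intro that[of "int n - m"]) auto
  qed
qed

lemma eq_if_same_half_cong:
  fixes a b n :: nat
  assumes "a < 2*n" "b < 2*n" "a < n \<longleftrightarrow> b < n" "[int a = int b] (mod int n)"
  shows "a = b"
proof (rule ccontr)
  assume "a \<noteq> b"
  then have "int n \<le> \<bar>int a - int b\<bar>"
    using dvd_imp_le_int[of "int a - int b" "int n"] assms(4) by (simp add: cong_iff_dvd_diff)
  with assms(1-3) show False
    by (auto simp: abs_if split: if_splits)
qed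

lemma two_layer_eq_iff:
  "{(a, 0::nat), (b, 0), (c, 1), (d, 1)} = {(a', 0), (b', 0), (c', 1), (d', 1)} \<longleftrightarrow>
    {a, b} = {a', b'} \<and> {c, d} = {c', d'}"
proof
  have layer: "{t. (t, l) \<in> {(a, 0::nat), (b, 0), (c, 1), (d, 1)}} =
      (if l = 0 then {a, b} else if l = 1 then {c, d} else {})" for a b c d :: 'a and l
    by auto
  assume eq: "{(a, 0::nat), (b, 0), (c, 1), (d, 1)} = {(a', 0), (b', 0), (c', 1), (d', 1)}"
  have "{t. (t, l) \<in> {(a, 0::nat), (b, 0), (c, 1), (d, 1)}} = {t. (t, l) \<in> {(a', 0), (b', 0), (c', 1), (d', 1)}}"
    for l
    using eq by (rule arg_cong)
  from this[of 0] this[of 1] show "{a, b} = {a', b'} \<and> {c, d} = {c', d'}"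
    unfolding layer by simp
next
  assume "{a, b} = {a', b'} \<and> {c, d} = {c', d'}"
  then have "(\<lambda>t. (t, 0::nat)) ` {a, b} \<union> (\<lambda>t. (t, 1)) ` {c, d} =
      (\<lambda>t. (t, 0)) ` {a', b'} \<union> (\<lambda>t. (t, 1)) ` {c', d'}"
    by simp
  then show "{(a, 0::nat), (b, 0), (c, 1), (d, 1)} = {(a', 0), (b', 0), (c', 1), (d', 1)}"
    by (simp add: insert_commute)
qed

lemma DLS_block_mixed_quadruple_iff:
  assumes "\<forall>b\<in>B. card b = 4" "v \<noteq> x" "v < w" "x < w"
  shows "{(v, 0::nat), (x, 0), (y, 1), (z, 1)} \<in> DLS_block w B A r \<longleftrightarrow> {y, z} = {A r v, A r x}"
proof -
  let ?Q = "{(v, 0::nat), (x, 0), (y, 1), (z, 1)}"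
  have no_block: "?Q \<noteq> (\<lambda>t. (t, l)) ` (b - {k}) \<union> {p}"
    if "b \<in> B" "k \<in> b" "l = 0 \<or> l = 1" for b k l p
  proof
    assume "?Q = (\<lambda>t. (t, l)) ` (b - {k}) \<union> {p}"
    then have "(\<lambda>t. (t, l)) ` (b - {k}) \<subseteq> ?Q"
      by (simp only: Un_upper1)
    then have "b - {k} \<subseteq> (if l = 0 then {v, x} else {y, z})"
      using that(3) by auto
    then have "card (b - {k}) \<le> card (if l = 0 then {v, x} else {y, z})"
      by (rule card_mono[rotated]) simp
    also have "\<dots> \<le> 2"
      by (simp add: card_insert_if)
    finally show False
      using assms(1) that(1,2) by (simp add: card_Diff_singleton)
  qed
  have "?Q \<notin> {(\<lambda>t. (t, 0::nat)) ` (b - {k}) \<union> {(A r k, 1)} | b k. b \<in> B \<and> k \<in> b}"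
    using no_block[where l = 0] by auto
  moreover have "?Q \<notin> {(\<lambda>t. (t, 1::nat)) ` (b - {k}) \<union> {(A r k, 0)} | b k. b \<in> B \<and> k \<in> b}"
    using no_block[where l = 1] by auto
  ultimately have "?Q \<in> DLS_block w B A r \<longleftrightarrow>
      (\<exists>x1 x2. ?Q = {(x1, 0), (x2, 0), (A r x1, 1), (A r x2, 1)} \<and> x1 < w \<and> x2 < w \<and> x1 \<noteq> x2)"
    unfolding DLS_block_def by blast
  also have "\<dots> \<longleftrightarrow> {y, z} = {A r v, A r x}"
    unfolding two_layer_eq_iff using assms(2-4) by (auto simp: doubleton_eq_iff)
  finally show ?thesis .
qed

definition M_offset :: "nat \<Rightarrow> bool \<Rightarrow> nat \<Rightarrow> int" where
  "M_offset n upper c =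
    (if upper then (if c < n then - int c else int c)
     else (if c < n then int c - 1 else - int c))"

lemma M_eq_offset:
  assumes "r < 2*n" "c < 2*n"
  shows "M n r c = (if r < n \<longleftrightarrow> c < n then 0 else n) + nat ((int r + M_offset n (r < n) c) mod int n)"
proof -
  have shift: "(a - int n) mod int n = a mod int n" for a :: int
    by simp
  show ?thesis
    using assms shift[of "int c + int r - 1"] shift[of "int c + int r"]
    by (auto simp: M_def M_offset_def algebra_simps)
qed

lemma M_less_iff:
  assumes "r < 2*n" "c < 2*n"
  shows "M n r c < n \<longleftrightarrow> (r < n \<longleftrightarrow> c < n)"
  using assms by (simp add: M_eq_offset nat_less_iff)

lemma M_less:
  assumes "r < 2*n" "c < 2*n"
  shows "M n r c < 2*n"
proof -
  have "nat ((int r + M_offset n (r < n) c) mod int n) < n"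
    using assms by (intro nat_mod_less) simp
  then show ?thesis
    unfolding M_eq_offset[OF assms] by (simp only: split: if_split) linarith
qed

lemma M_cong:
  assumes "r < 2*n" "c < 2*n"
  shows "[int (M n r c) = int r + M_offset n (r < n) c] (mod int n)"
  using assms by (simp add: M_eq_offset cong_def)

lemma M_column_inj:
  assumes "r < 2*n" "r' < 2*n" "c < 2*n" "M n r c = M n r' c"
  shows "r = r'"
proof -
  have same_half: "r < n \<longleftrightarrow> r' < n"
    using M_less_iff[OF assms(1,3)] M_less_iff[OF assms(2,3)] assms(4) by auto
  have "[int r + M_offset n (r < n) c = int (M n r c)] (mod int n)"
    using M_cong[OF assms(1,3)] by (rule cong_sym)
  also have "int (M n r c) = int (M n r' c)"
    using assms(4) by simp
  also have "[int (M n r' c) = int r' + M_offset n (r' < n) c] (mod int n)"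
    using M_cong[OF assms(2,3)] .
  finally have "[int r = int r'] (mod int n)"
    using same_half by (simp add: cong_add_rcancel)
  then show ?thesis
    using eq_if_same_half_cong assms(1,2) same_half by blast
qed

lemma M_column_surj:
  assumes "c < 2*n" "t < 2*n" "t < n \<longleftrightarrow> (upper \<longleftrightarrow> c < n)"
  obtains r where "r < 2*n" "r < n \<longleftrightarrow> upper" "M n r c = t"
proof
  define r where "r = (if upper then 0 else n) + nat ((int t - M_offset n upper c) mod int n)"
  have "n > 0"
    using assms by simp
  then show r_less: "r < 2*n" and r_half: "r < n \<longleftrightarrow> upper"
    using nat_mod_less[of n "int t - M_offset n upper c"] by (auto simp: r_def)
  have "[int r = int t - M_offset n upper c] (mod int n)"
    using \<open>n > 0\<close> by (simp add: r_def cong_def)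
  then have "[int r + M_offset n upper c = int t - M_offset n upper c + M_offset n upper c] (mod int n)"
    by (rule cong_add) simp
  then have "[int (M n r c) = int t] (mod int n)"
    using cong_trans[OF M_cong[OF r_less assms(1)]] r_half by simp
  then show "M n r c = t"
    using eq_if_same_half_cong M_less M_less_iff r_less r_half assms by metis
qed

lemma M_pair_iff:
  assumes "v < 2*n" "x < 2*n" "y < 2*n" "z < 2*n"
  shows "(\<exists>r<2*n. M n r v = y \<and> M n r x = z) \<longleftrightarrow>
    (\<exists>upper. (y < n \<longleftrightarrow> (upper \<longleftrightarrow> v < n)) \<and> (z < n \<longleftrightarrow> (upper \<longleftrightarrow> x < n)) \<and>
       [int z - int y = M_offset n upper x - M_offset n upper v] (mod int n))"
proof
  assume "\<exists>r<2*n. M n r v = y \<and> M n r x = z"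
  then obtain r where r: "r < 2*n" "M n r v = y" "M n r x = z"
    by blast
  have "[int z - int y = (int r + M_offset n (r < n) x) - (int r + M_offset n (r < n) v)] (mod int n)"
    using cong_diff[OF M_cong[OF r(1) assms(2)] M_cong[OF r(1) assms(1)]] r(2,3) by simp
  then show "\<exists>upper. (y < n \<longleftrightarrow> (upper \<longleftrightarrow> v < n)) \<and> (z < n \<longleftrightarrow> (upper \<longleftrightarrow> x < n)) \<and>
       [int z - int y = M_offset n upper x - M_offset n upper v] (mod int n)"
    using M_less_iff[OF r(1) assms(1)] M_less_iff[OF r(1) assms(2)] r(2,3)
    by (intro exI[of _ "r < n"]) simp
next
  assume "\<exists>upper. (y < n \<longleftrightarrow> (upper \<longleftrightarrow> v < n)) \<and> (z < n \<longleftrightarrow> (upper \<longleftrightarrow> x < n)) \<and>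
       [int z - int y = M_offset n upper x - M_offset n upper v] (mod int n)"
  then obtain upper where half_y: "y < n \<longleftrightarrow> (upper \<longleftrightarrow> v < n)"
    and half_z: "z < n \<longleftrightarrow> (upper \<longleftrightarrow> x < n)"
    and diff: "[int z - int y = M_offset n upper x - M_offset n upper v] (mod int n)"
    by blast
  obtain r where r: "r < 2*n" "r < n \<longleftrightarrow> upper" "M n r v = y"
    using M_column_surj[OF assms(1,3) half_y] by blast
  have "[int (M n r x) = int r + M_offset n upper x] (mod int n)"
    using M_cong[OF r(1) assms(2)] r(2) by simp
  also have "int r + M_offset n upper x
      = (int r + M_offset n upper v) + (M_offset n upper x - M_offset n upper v)"
    by simp
  also have "[\<dots> = int y + (int z - int y)] (mod int n)"
    using cong_add[OF cong_sym[OF M_cong[OF r(1) assms(1)]] cong_sym[OF diff]] r(2,3) by simp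
  finally have "[int (M n r x) = int z] (mod int n)"
    by simp
  then have "M n r x = z"
    using eq_if_same_half_cong M_less[OF r(1) assms(2)] M_less_iff[OF r(1) assms(2)] r(2) assms(4) half_z
    by blast
  with r show "\<exists>r<2*n. M n r v = y \<and> M n r x = z"
    by blast
qed

lemma M_no_intercalate:
  assumes "odd n" "n > 1" "r < 2*n" "r' < 2*n" "v < 2*n" "x < 2*n" "v \<noteq> x"
    and "M n r v = M n r' x" "M n r x = M n r' v"
  shows False
proof -
  define u u' where "u = (r < n)" and "u' = (r' < n)"
  have half_v: "(u \<longleftrightarrow> v < n) \<longleftrightarrow> (u' \<longleftrightarrow> x < n)"
    using M_less_iff[OF assms(3,5)] M_less_iff[OF assms(4,6)] assms(8) by (simp add: u_def u'_def)
  have cong_of_eq: "[int r + M_offset n u a = int r' + M_offset n u' b] (mod int n)"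
    if "a < 2*n" "b < 2*n" "M n r a = M n r' b" for a b
  proof -
    have "[int r + M_offset n u a = int (M n r a)] (mod int n)"
      using M_cong[OF assms(3) that(1)] by (simp add: u_def cong_sym)
    also have "int (M n r a) = int (M n r' b)"
      using that(3) by simp
    also have "[\<dots> = int r' + M_offset n u' b] (mod int n)"
      using M_cong[OF assms(4) that(2)] by (simp add: u'_def)
    finally show ?thesis .
  qed
  \<comment> \<open>subtracting the two congruences eliminates r and r'\<close>
  have offset_sums: "[M_offset n u v + M_offset n u' v = M_offset n u x + M_offset n u' x] (mod int n)"
    using cong_diff[OF cong_of_eq[OF assms(5,6,8)] cong_of_eq[OF assms(6,5,9)]]
    by (simp add: cong_iff_dvd_diff algebra_simps)
  show False
  proof (cases "u = u'")
    case True
    have "coprime 2 (int n)"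
      using assms(1) by simp
    then have "[M_offset n u v = M_offset n u x] (mod int n)"
      using offset_sums True
      by (simp flip: mult_2 add: cong_mult_lcancel)
    moreover have same_half: "v < n \<longleftrightarrow> x < n"
      using half_v True by (cases u) auto
    ultimately have "[int v = int x] (mod int n)"
      by (auto simp: M_offset_def cong_iff_dvd_diff algebra_simps dvd_diff_commute split: if_splits)
    then show False
      using eq_if_same_half_cong assms(5-7) same_half by blast
  next
    case False
    have "M_offset n u c + M_offset n u' c = (if c < n then -1 else 0)" for c
      using False by (cases u) (auto simp: M_offset_def)
    moreover have "v < n \<longleftrightarrow> \<not> x < n"
      using half_v False by auto
    ultimately have "[-1 = 0] (mod int n)"
      using offset_sums
      by (auto simp: cong_sym_eq)
    then show False
      using assms(2) by (simp add: cong_iff_dvd_diff)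
  qed
qed

lemma M_row_unique:
  assumes "odd n" "n > 1" "r < 2*n" "r' < 2*n" "v < 2*n" "x < 2*n" "v \<noteq> x"
    and "{M n r v, M n r x} = {M n r' v, M n r' x}"
  shows "r = r'"
  using assms(8) M_column_inj[OF assms(3,4,5)] M_no_intercalate[OF assms(1-7)]
  by (auto simp: doubleton_eq_iff)

lemma M_offset_diff_same_half:
  assumes "v < n \<longleftrightarrow> x < n"
  shows "M_offset n u x - M_offset n u v = (if u \<longleftrightarrow> v < n then int v - int x else int x - int v)"
  using assms by (auto simp: M_offset_def)

lemma M_offset_diff_mixed_half:
  assumes "v < n" "n \<le> x"
  shows "M_offset n u x - M_offset n u v = (if u then int v + int x else 1 - (int v + int x))"
  using assms by (auto simp: M_offset_def)

lemma M_pair_same_half_iff: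
  assumes "v < 2*n" "x < 2*n" "y < 2*n" "z < 2*n" "v < n \<longleftrightarrow> x < n"
  shows "(\<exists>r<2*n. M n r v = y \<and> M n r x = z) \<longleftrightarrow>
    (y < n \<longleftrightarrow> z < n) \<and> [int z - int y = (if y < n then int v - int x else int x - int v)] (mod int n)"
  unfolding M_pair_iff[OF assms(1-4)] ex_bool_determined_iff M_offset_diff_same_half[OF assms(5)]
  using assms(5) by auto

lemma M_pair_mixed_half_iff:
  assumes "v < n" "n \<le> x" "x < 2*n" "y < 2*n" "z < 2*n"
  shows "(\<exists>r<2*n. M n r v = y \<and> M n r x = z) \<longleftrightarrow>
    (y < n \<longleftrightarrow> n \<le> z) \<and>
    [int z - int y = (if y < n then int v + int x else 1 - (int v + int x))] (mod int n)"
proof -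
  have v: "v < 2*n"
    using assms by simp
  show ?thesis
    unfolding M_pair_iff[OF v assms(3-5)] ex_bool_determined_iff M_offset_diff_mixed_half[OF assms(1,2)]
    using assms(1,2) by auto
qed

lemma A_B_cls_iff:
  assumes "v < 2*n" "x < 2*n"
  shows "{v, x} \<in> A_cls n i \<union> B_cls n i \<longleftrightarrow>
    (v < n \<longleftrightarrow> x < n) \<and> ([int x - int v = i] (mod int n) \<or> [int v - int x = i] (mod int n))"
proof
  assume "{v, x} \<in> A_cls n i \<union> B_cls n i"
  then show "(v < n \<longleftrightarrow> x < n) \<and> ([int x - int v = i] (mod int n) \<or> [int v - int x = i] (mod int n))"
    by (auto simp: A_cls_def B_cls_def doubleton_eq_iff)
next
  have in_cls: "{a, b} \<in> A_cls n i \<union> B_cls n i"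
    if "a < 2*n" "b < 2*n" "a < n \<longleftrightarrow> b < n" "[int b - int a = i] (mod int n)" for a b
    using that by (cases "a < n") (auto simp: A_cls_def B_cls_def)
  assume "(v < n \<longleftrightarrow> x < n) \<and> ([int x - int v = i] (mod int n) \<or> [int v - int x = i] (mod int n))"
  then show "{v, x} \<in> A_cls n i \<union> B_cls n i"
    using in_cls[of v x] in_cls[of x v] assms by (auto simp: insert_commute)
qed

lemma C_cls_iff:
  assumes "v < 2*n" "x < 2*n"
  shows "{v, x} \<in> C_cls n i \<longleftrightarrow> (v < n \<longleftrightarrow> n \<le> x) \<and> [int v + int x = i] (mod int n)"
proof
  assume "{v, x} \<in> C_cls n i"
  then show "(v < n \<longleftrightarrow> n \<le> x) \<and> [int v + int x = i] (mod int n)"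
    by (auto simp: C_cls_def doubleton_eq_iff add.commute)
next
  have in_cls: "{a, b} \<in> C_cls n i"
    if "a < n" "n \<le> b" "b < 2*n" "[int a + int b = i] (mod int n)" for a b
    using that by (auto simp: C_cls_def)
  assume "(v < n \<longleftrightarrow> n \<le> x) \<and> [int v + int x = i] (mod int n)"
  then show "{v, x} \<in> C_cls n i"
    using in_cls[of v x] in_cls[of x v] assms by (cases "v < n") (auto simp: insert_commute add.commute)
qed

lemma D_cls_iff:
  assumes "y < 2*n" "z < 2*n"
  shows "{y, z} \<in> D_cls n i \<longleftrightarrow>
    y < n \<and> n \<le> z \<and> [int z - int y = i] (mod int n) \<or>
    z < n \<and> n \<le> y \<and> [int y - int z = i] (mod int n)"
  using assms by (auto simp: D_cls_def doubleton_eq_iff)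

lemma D_cls_cong:
  assumes "[i = j] (mod int n)"
  shows "D_cls n i = D_cls n j"
proof -
  have "[a = i] (mod int n) \<longleftrightarrow> [a = j] (mod int n)" for a
    using assms cong_sym cong_trans by meson
  then show ?thesis
    by (simp add: D_cls_def)
qed

lemma M_rows_same_half_iff:
  assumes "v < 2*n" "x < 2*n" "y < 2*n" "z < 2*n" "v < n \<longleftrightarrow> x < n"
  shows "(\<exists>r<2*n. {y, z} = {M n r v, M n r x}) \<longleftrightarrow>
    (y < n \<longleftrightarrow> z < n) \<and>
    ([int z - int y = int x - int v] (mod int n) \<or> [int z - int y = int v - int x] (mod int n))"
proof -
  have "(\<exists>r<2*n. {y, z} = {M n r v, M n r x}) \<longleftrightarrow>
      (\<exists>r<2*n. M n r v = y \<and> M n r x = z) \<or> (\<exists>r<2*n. M n r v = z \<and> M n r x = y)"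
    by (auto simp: doubleton_eq_iff)
  also have "\<dots> \<longleftrightarrow> (y < n \<longleftrightarrow> z < n) \<and>
    ([int z - int y = int x - int v] (mod int n) \<or> [int z - int y = int v - int x] (mod int n))"
    unfolding M_pair_same_half_iff[OF assms(1-5)] M_pair_same_half_iff[OF assms(1,2,4,3,5)]
    using cong_diff_swap[of "int y" "int z"] by (cases "y < n") auto
  finally show ?thesis .
qed

lemma M_rows_mixed_half_iff:
  assumes "v < n" "n \<le> x" "x < 2*n" "y < 2*n" "z < 2*n"
  shows "(\<exists>r<2*n. {y, z} = {M n r v, M n r x}) \<longleftrightarrow>
    {y, z} \<in> D_cls n (int v + int x - 1) \<union> D_cls n (int v + int x)"
proof -
  have "(\<exists>r<2*n. {y, z} = {M n r v, M n r x}) \<longleftrightarrow>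
      (\<exists>r<2*n. M n r v = y \<and> M n r x = z) \<or> (\<exists>r<2*n. M n r v = z \<and> M n r x = y)"
    by (auto simp: doubleton_eq_iff)
  also have "\<dots> \<longleftrightarrow> {y, z} \<in> D_cls n (int v + int x - 1) \<union> D_cls n (int v + int x)"
    unfolding M_pair_mixed_half_iff[OF assms(1-5)] M_pair_mixed_half_iff[OF assms(1-3,5,4)]
      Un_iff D_cls_iff[OF assms(4,5)]
    using cong_diff_swap[of "int y" "int z" "1 - (int v + int x)"]
      cong_diff_swap[of "int z" "int y" "1 - (int v + int x)"]
    by (cases "y < n") auto
  finally show ?thesis .
qed

lemma A_B_condition_iff:
  assumes "odd n" "v < 2*n" "x < 2*n" "y < 2*n" "z < 2*n" "v \<noteq> x"
  shows "(\<exists>i::int. 1 \<le> i \<and> 2*i \<le> int n - 1 \<and>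
      {v, x} \<in> A_cls n i \<union> B_cls n i \<and> {y, z} \<in> A_cls n i \<union> B_cls n i) \<longleftrightarrow>
    (v < n \<longleftrightarrow> x < n) \<and> (y < n \<longleftrightarrow> z < n) \<and>
    ([int z - int y = int x - int v] (mod int n) \<or> [int z - int y = int v - int x] (mod int n))"
proof -
  have cls_iff: "{a, b} \<in> A_cls n i \<union> B_cls n i \<longleftrightarrow>
      (a < n \<longleftrightarrow> b < n) \<and> ([int b - int a = i] (mod int n) \<or> [int b - int a = - i] (mod int n))"
    if "a < 2*n" "b < 2*n" for a b i
    using A_B_cls_iff[OF that] cong_diff_swap[of "int a" "int b" i] by auto
  show ?thesis
    unfolding cls_iff[OF assms(2,3)] cls_iff[OF assms(4,5)]
  proof
    assume "\<exists>i. 1 \<le> i \<and> 2*i \<le> int n - 1 \<and>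
      ((v < n \<longleftrightarrow> x < n) \<and> ([int x - int v = i] (mod int n) \<or> [int x - int v = - i] (mod int n))) \<and>
      ((y < n \<longleftrightarrow> z < n) \<and> ([int z - int y = i] (mod int n) \<or> [int z - int y = - i] (mod int n)))"
    then obtain i where halves: "v < n \<longleftrightarrow> x < n" "y < n \<longleftrightarrow> z < n"
      and vx: "[int x - int v = i] (mod int n) \<or> [int x - int v = - i] (mod int n)"
      and yz: "[int z - int y = i] (mod int n) \<or> [int z - int y = - i] (mod int n)"
      by blast
    have "[int z - int y = int x - int v] (mod int n) \<or> [int z - int y = - (int x - int v)] (mod int n)"
      by (rule cong_pm_trans[OF yz cong_pm_sym[OF vx]])
    with halves show "(v < n \<longleftrightarrow> x < n) \<and> (y < n \<longleftrightarrow> z < n) \<and>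
      ([int z - int y = int x - int v] (mod int n) \<or> [int z - int y = int v - int x] (mod int n))"
      by simp
  next
    assume R: "(v < n \<longleftrightarrow> x < n) \<and> (y < n \<longleftrightarrow> z < n) \<and>
      ([int z - int y = int x - int v] (mod int n) \<or> [int z - int y = int v - int x] (mod int n))"
    have "\<not> [int x - int v = 0] (mod int n)"
      using eq_if_same_half_cong[of x n v] R assms(2,3,6) by (auto simp: cong_diff_iff_cong_0)
    then obtain i where i: "1 \<le> i" "2*i \<le> int n - 1"
      and vx: "[int x - int v = i] (mod int n) \<or> [int x - int v = - i] (mod int n)"
      using odd_cong_pm_representative assms(1) by blast
    have "[int z - int y = int x - int v] (mod int n) \<or> [int z - int y = - (int x - int v)] (mod int n)"
      using R by simp
    from cong_pm_trans[OF this vx] i vx R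
    show "\<exists>i. 1 \<le> i \<and> 2*i \<le> int n - 1 \<and>
      ((v < n \<longleftrightarrow> x < n) \<and> ([int x - int v = i] (mod int n) \<or> [int x - int v = - i] (mod int n))) \<and>
      ((y < n \<longleftrightarrow> z < n) \<and> ([int z - int y = i] (mod int n) \<or> [int z - int y = - i] (mod int n)))"
      by blast
  qed
qed

lemma C_D_condition_iff:
  assumes "n > 0" "v < 2*n" "x < 2*n"
  shows "(\<exists>i::int. 0 \<le> i \<and> i \<le> int n - 1 \<and>
      {v, x} \<in> C_cls n i \<and> {y, z} \<in> D_cls n (i - 1) \<union> D_cls n i) \<longleftrightarrow>
    (v < n \<longleftrightarrow> n \<le> x) \<and> {y, z} \<in> D_cls n (int v + int x - 1) \<union> D_cls n (int v + int x)"
proof -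
  have D_cls_shift: "D_cls n (i - 1) \<union> D_cls n i = D_cls n (int v + int x - 1) \<union> D_cls n (int v + int x)"
    if "[int v + int x = i] (mod int n)" for i
    using D_cls_cong[OF that] D_cls_cong[OF cong_diff[OF that cong_refl[of 1]]] by simp
  show ?thesis
  proof
    assume "\<exists>i::int. 0 \<le> i \<and> i \<le> int n - 1 \<and>
      {v, x} \<in> C_cls n i \<and> {y, z} \<in> D_cls n (i - 1) \<union> D_cls n i"
    then show "(v < n \<longleftrightarrow> n \<le> x) \<and> {y, z} \<in> D_cls n (int v + int x - 1) \<union> D_cls n (int v + int x)"
      using C_cls_iff[OF assms(2,3)] D_cls_shift by blast
  next
    define i where "i = (int v + int x) mod int n"
    have i: "0 \<le> i" "i \<le> int n - 1" "[int v + int x = i] (mod int n)"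
      using assms(1) by (simp_all add: i_def cong_def)
    assume "(v < n \<longleftrightarrow> n \<le> x) \<and> {y, z} \<in> D_cls n (int v + int x - 1) \<union> D_cls n (int v + int x)"
    with i show "\<exists>i::int. 0 \<le> i \<and> i \<le> int n - 1 \<and>
      {v, x} \<in> C_cls n i \<and> {y, z} \<in> D_cls n (i - 1) \<union> D_cls n i"
      using C_cls_iff[OF assms(2,3)] D_cls_shift by blast
  qed
qed

lemma M_rows_iff_classes:
  assumes "odd n" "v < 2*n" "x < 2*n" "y < 2*n" "z < 2*n" "v \<noteq> x"
  shows "(\<exists>r<2*n. {y, z} = {M n r v, M n r x}) \<longleftrightarrow>
    (\<exists>i::int. 1 \<le> i \<and> 2*i \<le> int n - 1 \<and>
      {v, x} \<in> A_cls n i \<union> B_cls n i \<and> {y, z} \<in> A_cls n i \<union> B_cls n i) \<or>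
    (\<exists>i::int. 0 \<le> i \<and> i \<le> int n - 1 \<and>
      {v, x} \<in> C_cls n i \<and> {y, z} \<in> D_cls n (i - 1) \<union> D_cls n i)"
proof -
  have "n > 0"
    using assms(1) by (simp add: odd_pos)
  show ?thesis
  proof (cases "v < n \<longleftrightarrow> x < n")
    case True
    then show ?thesis
      unfolding M_rows_same_half_iff[OF assms(2-5) True] A_B_condition_iff[OF assms]
        C_D_condition_iff[OF \<open>n > 0\<close> assms(2,3)]
      by auto
  next
    case False
    have "(\<exists>r<2*n. {y, z} = {M n r v, M n r x}) \<longleftrightarrow>
        {y, z} \<in> D_cls n (int v + int x - 1) \<union> D_cls n (int v + int x)"
    proof (cases "v < n")
      case True
      with False assms(3-5) show ?thesis
        by (intro M_rows_mixed_half_iff) auto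
    next
      case False
      with \<open>\<not> (v < n \<longleftrightarrow> x < n)\<close> assms(2,4,5) show ?thesis
        using M_rows_mixed_half_iff[of x n v y z] by (simp add: insert_commute add.commute)
    qed
    with False show ?thesis
      unfolding A_B_condition_iff[OF assms] C_D_condition_iff[OF \<open>n > 0\<close> assms(2,3)]
      by auto
  qed
qed

theorem lemma2:
  fixes n :: nat and B :: "nat set set" and v x y z :: nat
  assumes "n mod 6 = 1 \<or> n mod 6 = 5"
    and "n > 1"
    and "is_SQS (2*n) B"
    and "v < 2*n" "x < 2*n" "y < 2*n" "z < 2*n"
    and "v \<noteq> x" "y \<noteq> z"
  shows "({(v,0),(x,0),(y,1),(z,1)} \<in> (\<Union>r<2*n. DLS_block (2*n) B (M n) r)
           \<longleftrightarrow>
          ((\<exists>i::int. 1 \<le> i \<and> 2*i \<le> int n - 1 \<and>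
               {v,x} \<in> A_cls n i \<union> B_cls n i \<and> {y,z} \<in> A_cls n i \<union> B_cls n i)
           \<or> (\<exists>i::int. 0 \<le> i \<and> i \<le> int n - 1 \<and>
               {v,x} \<in> C_cls n i \<and> {y,z} \<in> D_cls n (i - 1) \<union> D_cls n i)))
       \<and> ({(v,0),(x,0),(y,1),(z,1)} \<in> (\<Union>r<2*n. DLS_block (2*n) B (M n) r)
           \<longrightarrow> (\<exists>!r. r < 2*n \<and> {(v,0),(x,0),(y,1),(z,1)} \<in> DLS_block (2*n) B (M n) r))"
proof -
  have "odd n"
    using assms(1) by presburger
  have "\<forall>b\<in>B. card b = 4"
    using assms(3) by (simp add: is_SQS_def)
  then have block_iff: "{(v,0),(x,0),(y,1),(z,1)} \<in> DLS_block (2*n) B (M n) r \<longleftrightarrow>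
      {y, z} = {M n r v, M n r x}" for r
    using DLS_block_mixed_quadruple_iff assms(4,5,8) by blast
  have row_unique: "r = r'"
    if "r < 2*n" "r' < 2*n" "{y, z} = {M n r v, M n r x}" "{y, z} = {M n r' v, M n r' x}" for r r'
    using M_row_unique[OF \<open>odd n\<close> assms(2) that(1,2) assms(4,5,8)] that(3,4) by simp
  let ?Q = "{(v, 0::nat), (x, 0), (y, 1::nat), (z, 1)}"
  have in_union: "?Q \<in> (\<Union>r<2*n. DLS_block (2*n) B (M n) r) \<longleftrightarrow>
      (\<exists>r<2*n. {y, z} = {M n r v, M n r x})"
    using block_iff by blast
  have "\<exists>!r. r < 2*n \<and> ?Q \<in> DLS_block (2*n) B (M n) r"
    if "\<exists>r<2*n. {y, z} = {M n r v, M n r x}"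
  proof -
    from that obtain r where "r < 2*n" "{y, z} = {M n r v, M n r x}"
      by blast
    with block_iff row_unique show ?thesis
      by (intro ex1I[of _ r]) auto
  qed
  then show ?thesis
    unfolding in_union M_rows_iff_classes[OF \<open>odd n\<close> assms(4-8)] by blast
qed

end
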